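(* Let $G$ be a graph with $\lambda_3(G)=k\ge 2$ and let $S=\{x,y,z\}\subseteq V(G)$ be a set of three distinct vertices. Then there exist $k$ pairwise edge-disjoint $S$-trees $T_1,\dots,T_k$ in $G$ such that $E(T_i)\cap E(G[S])=\emptyset$ for all $i\ge 3$ (i.e., at least $k-2$ of them use no edge of the induced subgraph $G[S]$).
   Context: For a graph $G$ and $S\subseteq V(G)$ with $|S|\ge 2$, an $S$-tree is a subgraph of $G$ that is a tree containing all vertices of $S$; $\lambda(S)$ is the maximum number of pairwise edge-disjoint $S$-trees, and $\lambda_3(G)=\min\{\lambda(S): |S|=3\}$. $G[S]$ denotes the subgraph induced by $S$. *)

theory Defs
  imports Main
begin

definition simple_graph :: "'a set \<Rightarrow> 'a set set \<Rightarrow> bool" where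
  "simple_graph V E \<longleftrightarrow> finite V \<and>
     (\<forall>e\<in>E. \<exists>u v. u \<noteq> v \<and> u \<in> V \<and> v \<in> V \<and> e = {u, v})"

definition is_subgraph :: "'a set \<Rightarrow> 'a set set \<Rightarrow> 'a set \<Rightarrow> 'a set set \<Rightarrow> bool" where
  "is_subgraph VT ET V E \<longleftrightarrow> VT \<subseteq> V \<and> ET \<subseteq> E \<and> (\<forall>e\<in>ET. e \<subseteq> VT)"

definition connected_graph :: "'a set \<Rightarrow> 'a set set \<Rightarrow> bool" where
  "connected_graph VT ET \<longleftrightarrow>
     (\<forall>u\<in>VT. \<forall>v\<in>VT. (\<lambda>a b. {a, b} \<in> ET)\<^sup>*\<^sup>* u v)"

definition is_cycle :: "'a set set \<Rightarrow> 'a list \<Rightarrow> bool" where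
  "is_cycle ET vs \<longleftrightarrow> length vs \<ge> 3 \<and> distinct vs \<and>
     (\<forall>i. i + 1 < length vs \<longrightarrow> {vs ! i, vs ! (i + 1)} \<in> ET) \<and>
     {last vs, hd vs} \<in> ET"

definition acyclic_graph :: "'a set set \<Rightarrow> bool" where
  "acyclic_graph ET \<longleftrightarrow> \<not> (\<exists>vs. is_cycle ET vs)"

definition is_tree :: "'a set \<Rightarrow> 'a set set \<Rightarrow> bool" where
  "is_tree VT ET \<longleftrightarrow> VT \<noteq> {} \<and> connected_graph VT ET \<and> acyclic_graph ET"

definition S_tree :: "'a set \<Rightarrow> 'a set set \<Rightarrow> 'a set \<Rightarrow> 'a set \<times> 'a set set \<Rightarrow> bool" where
  "S_tree V E S T \<longleftrightarrow> is_subgraph (fst T) (snd T) V E \<and> is_tree (fst T) (snd T) \<and> S \<subseteq> fst T"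

definition edge_disjoint_S_trees ::
  "'a set \<Rightarrow> 'a set set \<Rightarrow> 'a set \<Rightarrow> nat \<Rightarrow> (nat \<Rightarrow> 'a set \<times> 'a set set) \<Rightarrow> bool" where
  "edge_disjoint_S_trees V E S k T \<longleftrightarrow>
     (\<forall>i<k. S_tree V E S (T i)) \<and>
     (\<forall>i<k. \<forall>j<k. i \<noteq> j \<longrightarrow> snd (T i) \<inter> snd (T j) = {})"

definition lambda_S :: "'a set \<Rightarrow> 'a set set \<Rightarrow> 'a set \<Rightarrow> nat" where
  "lambda_S V E S = Max {k. \<exists>T. edge_disjoint_S_trees V E S k T}"

definition lambda3 :: "'a set \<Rightarrow> 'a set set \<Rightarrow> nat" where
  "lambda3 V E = Min {lambda_S V E S | S. S \<subseteq> V \<and> card S = 3}"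

definition induced_edges :: "'a set set \<Rightarrow> 'a set \<Rightarrow> 'a set set" where
  "induced_edges E S = {e \<in> E. e \<subseteq> S}"

end

theory Submission
  imports Defs "HOL-Library.Disjoint_Sets"
begin

text \<open>Any edge set connecting \<open>S\<close> contains an \<open>S\<close>-tree: an inclusion-minimal connecting
  subset is one. Start from \<open>k\<close> edge-disjoint \<open>S\<close>-trees. Since \<open>G[S]\<close> has at most three
  edges, if three trees meet \<open>G[S]\<close> then each contains exactly one of its edges \<open>e\<^sub>i\<close>,
  and together they use all of them. Removing \<open>e\<^sub>i\<close> from \<open>T\<^sub>i\<close> still leaves some other
  pair \<open>d\<^sub>i\<close> of \<open>S\<close> connected. Two of the \<open>d\<^sub>i\<close> differ, say \<open>d\<^sub>i \<noteq> d\<^sub>j\<close>: a common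
  value would be some \<open>e\<^sub>m\<close>, contradicting \<open>d\<^sub>m \<noteq> e\<^sub>m\<close>. Then
  \<open>(T\<^sub>i - e\<^sub>i) \<union> (T\<^sub>j - e\<^sub>j)\<close> connects \<open>S\<close> avoiding \<open>G[S]\<close>, and \<open>{e\<^sub>i, e\<^sub>j}\<close> is a path
  through \<open>S\<close>; the \<open>S\<close>-trees they contain replace \<open>T\<^sub>i\<close> and \<open>T\<^sub>j\<close>, after which at most
  two trees meet \<open>G[S]\<close>. Reordering puts those first.\<close>

abbreviation reach :: "'a set set \<Rightarrow> 'a \<Rightarrow> 'a \<Rightarrow> bool" where
  "reach F \<equiv> (\<lambda>a b. {a, b} \<in> F)\<^sup>*\<^sup>*"

definition connects :: "'a set set \<Rightarrow> 'a set \<Rightarrow> bool" where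
  "connects F A \<longleftrightarrow> (\<forall>u\<in>A. \<forall>v\<in>A. reach F u v)"

lemma reach_mono: "reach A u v \<Longrightarrow> A \<subseteq> B \<Longrightarrow> reach B u v"
  by (induction rule: rtranclp_induct) (auto elim: rtranclp.rtrancl_into_rtrancl)

lemma reach_sym: "reach A u v \<Longrightarrow> reach A v u"
proof (induction rule: rtranclp_induct)
  case (step y z)
  then have "{z, y} \<in> A" by (simp add: insert_commute)
  then show ?case using step.IH by (rule converse_rtranclp_into_rtranclp)
qed simp

lemma reach_Diff_edge_from_ends:
  assumes "reach F u w"
  shows "reach (F - {{u, v}}) u w \<or> reach (F - {{u, v}}) v w"
  using assms
proof (induction rule: rtranclp_induct)
  case (step y z)
  show ?case
  proof (cases "{y, z} = {u, v}")
    case True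
    then have "z = u \<or> z = v" by (auto simp: doubleton_eq_iff)
    then show ?thesis by auto
  next
    case False
    then have "{y, z} \<in> F - {{u, v}}" using step.hyps(2) by simp
    with step.IH show ?thesis by (auto intro: rtranclp.rtrancl_into_rtrancl)
  qed
qed simp

lemma reach_Diff_edge_unreached:
  assumes "reach F s v" "\<not> reach F s w" "w \<in> e"
  shows "reach (F - {e}) s v"
  using assms(1)
proof (induction rule: rtranclp_induct)
  case (step y z)
  have "{y, z} \<noteq> e"
  proof
    assume "{y, z} = e"
    then have "w = y \<or> w = z" using assms(3) by auto
    moreover have "reach F s z" using step.hyps by (rule rtranclp.rtrancl_into_rtrancl)
    ultimately show False using assms(2) step.hyps(1) by auto
  qed
  with step show ?case by (simp add: rtranclp.rtrancl_into_rtrancl)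
qed simp

lemma reach_Diff_edge_bypass:
  assumes "reach (F - {{p, q}}) p q" "reach F a b"
  shows "reach (F - {{p, q}}) a b"
  using assms(2)
proof (induction rule: rtranclp_induct)
  case (step y z)
  show ?case
  proof (cases "{y, z} = {p, q}")
    case True
    then have "y = p \<and> z = q \<or> y = q \<and> z = p" by (simp add: doubleton_eq_iff)
    then have "reach (F - {{p, q}}) y z"
      using assms(1) reach_sym[OF assms(1)] by auto
    then show ?thesis by (rule rtranclp_trans[OF step.IH])
  next
    case False
    with step show ?thesis by (simp add: rtranclp.rtrancl_into_rtrancl)
  qed
qed simp

lemma reach_empty: "reach {} u v \<Longrightarrow> u = v"
  by (induction rule: rtranclp_induct) auto

lemma connected_graph_iff_connects: "connected_graph VT ET \<longleftrightarrow> connects ET VT"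
  unfolding connected_graph_def connects_def ..

lemma connects_mono: "connects A S \<Longrightarrow> A \<subseteq> B \<Longrightarrow> connects B S"
  unfolding connects_def using reach_mono[of A _ _ B] by blast

lemma connects_doubleton: "connects F {p, q} \<longleftrightarrow> reach F p q"
  unfolding connects_def using reach_sym[of F p q] by auto

lemma connects_edge: "{p, q} \<in> F \<Longrightarrow> connects F {p, q}"
  unfolding connects_doubleton by (rule r_into_rtranclp)

lemma connects_from_center:
  assumes "\<And>v. v \<in> A \<Longrightarrow> reach F c v"
  shows "connects F A"
  unfolding connects_def
proof (intro ballI)
  fix u v assume "u \<in> A" "v \<in> A"
  then have "reach F c u" "reach F c v" using assms by simp_all
  then show "reach F u v" by (rule rtranclp_trans[OF reach_sym])
qed

lemma connects_Un:
  assumes "connects F A" "connects F B" "A \<inter> B \<noteq> {}"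
  shows "connects F (A \<union> B)"
proof -
  obtain c where c: "c \<in> A" "c \<in> B" using assms(3) by blast
  show ?thesis
  proof (rule connects_from_center)
    fix v assume "v \<in> A \<union> B"
    then show "reach F c v" using assms(1,2) c unfolding connects_def by (elim UnE) simp_all
  qed
qed

text \<open>Two distinct pairs of a three-element set cover it and share a point.\<close>
lemma connects_two_pairs:
  assumes "card S = 3" "d1 \<subseteq> S" "d2 \<subseteq> S" "card d1 = 2" "card d2 = 2" "d1 \<noteq> d2"
    and "connects F d1" "connects F d2"
  shows "connects F S"
proof -
  have fin: "finite S" using assms(1) by (simp add: card_ge_0_finite)
  have "finite d1" "finite d2" using fin assms(2,3) finite_subset by blast+
  have "\<not> d2 \<subseteq> d1"
    using card_seteq[OF \<open>finite d1\<close>, of d2] assms(4-6) by auto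
  then have "d1 \<subset> d1 \<union> d2" by blast
  then have "card d1 < card (d1 \<union> d2)"
    using \<open>finite d1\<close> \<open>finite d2\<close> by (intro psubset_card_mono) auto
  moreover have "d1 \<union> d2 \<subseteq> S" using assms(2,3) by blast
  ultimately have union: "d1 \<union> d2 = S" and "card (d1 \<union> d2) = 3"
    using card_seteq[OF fin, of "d1 \<union> d2"] card_mono[OF fin, of "d1 \<union> d2"] assms(1,4)
    by auto
  have "card (d1 \<inter> d2) > 0"
    using card_Un_Int[OF \<open>finite d1\<close> \<open>finite d2\<close>] \<open>card (d1 \<union> d2) = 3\<close> assms(4,5) by simp
  then have "d1 \<inter> d2 \<noteq> {}" by auto
  then have "connects F (d1 \<union> d2)" using assms(7,8) by (rule connects_Un[rotated 2])
  then show ?thesis unfolding union .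
qed

lemma is_cycle_reach_without_closing_edge:
  assumes "is_cycle F vs"
  shows "reach (F - {{last vs, hd vs}}) (hd vs) (last vs)"
proof -
  let ?n = "length vs" and ?F = "F - {{last vs, hd vs}}"
  have n3: "?n \<ge> 3" and d: "distinct vs" and ed: "\<And>i. i + 1 < ?n \<Longrightarrow> {vs ! i, vs ! (i+1)} \<in> F"
    using assms unfolding is_cycle_def by auto
  then have "vs \<noteq> []" by auto
  then have ends: "last vs = vs ! (?n - 1)" "hd vs = vs ! 0"
    by (simp_all add: last_conv_nth hd_conv_nth)
  have "reach ?F (vs ! 0) (vs ! i)" if "i < ?n" for i
    using that
  proof (induction i)
    case (Suc i)
    have i1: "i + 1 < ?n" using Suc.prems by simp
    have "{vs ! i, vs ! (i+1)} \<noteq> {vs ! (?n - 1), vs ! 0}"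
    proof
      assume "{vs ! i, vs ! (i+1)} = {vs ! (?n - 1), vs ! 0}"
      then consider "vs ! i = vs ! (?n - 1)" | "vs ! i = vs ! 0" "vs ! (i+1) = vs ! (?n - 1)"
        by (auto simp: doubleton_eq_iff)
      then show False
      proof cases
        case 1
        then have "i = ?n - 1" using nth_eq_iff_index_eq[OF d, of i "?n - 1"] i1 by simp
        then show False using i1 by simp
      next
        case 2
        then have "i = 0" "i + 1 = ?n - 1"
          using nth_eq_iff_index_eq[OF d, of i 0] nth_eq_iff_index_eq[OF d, of "i+1" "?n - 1"]
            i1 n3 \<open>vs \<noteq> []\<close>
          by simp_all
        then show False using n3 by simp
      qed
    qed
    then have "{vs ! i, vs ! Suc i} \<in> ?F" using ed[OF i1] ends by simp
    then have "reach ?F (vs ! i) (vs ! Suc i)" by (rule r_into_rtranclp)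
    with Suc.IH i1 show ?case by (simp add: rtranclp_trans)
  qed simp
  from this[of "?n - 1"] show ?thesis using n3 ends by simp
qed

lemma acyclic_if_minimal_connecting:
  assumes "connects F S" "\<And>e. e \<in> F \<Longrightarrow> \<not> connects (F - {e}) S"
  shows "acyclic_graph F"
  unfolding acyclic_graph_def
proof
  assume "\<exists>vs. is_cycle F vs"
  then obtain vs where cyc: "is_cycle F vs" ..
  let ?e = "{last vs, hd vs}"
  have "reach (F - {?e}) (last vs) (hd vs)"
    using reach_sym[OF is_cycle_reach_without_closing_edge[OF cyc]] .
  then have "connects (F - {?e}) S"
    using assms(1) reach_Diff_edge_bypass[of F "last vs" "hd vs"] unfolding connects_def by blast
  moreover have "?e \<in> F" using cyc by (simp add: is_cycle_def)
  ultimately show False using assms(2) by blast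
qed

lemma connected_if_minimal_connecting:
  assumes "connects F S" "\<And>e. e \<in> F \<Longrightarrow> \<not> connects (F - {e}) S" "s \<in> S"
  shows "connects F (S \<union> \<Union>F)"
proof (rule connects_from_center)
  fix w assume w: "w \<in> S \<union> \<Union>F"
  show "reach F s w"
  proof (rule ccontr)
    assume unreached: "\<not> reach F s w"
    have "w \<notin> S" using unreached assms(1,3) unfolding connects_def by auto
    then obtain e where e: "e \<in> F" "w \<in> e" using w by auto
    have "reach (F - {e}) s v" if "v \<in> S" for v
    proof (rule reach_Diff_edge_unreached[OF _ unreached e(2)])
      show "reach F s v" using assms(1,3) that unfolding connects_def by simp
    qed
    then have "connects (F - {e}) S" by (rule connects_from_center)
    with assms(2) e(1) show False by blast
  qed
qed

lemma simple_graph_edges_Pow: "simple_graph V E \<Longrightarrow> E \<subseteq> Pow V"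
  unfolding simple_graph_def by auto

lemma simple_graph_finite_edges: "simple_graph V E \<Longrightarrow> finite E"
  using simple_graph_edges_Pow finite_Pow_iff finite_subset unfolding simple_graph_def by metis

lemma connects_imp_S_tree:
  assumes G: "simple_graph V E" and "F \<subseteq> E" "S \<subseteq> V" "S \<noteq> {}" "connects F S"
  shows "\<exists>T. S_tree V E S T \<and> snd T \<subseteq> F"
proof -
  let ?P = "\<lambda>F'. F' \<subseteq> F \<and> connects F' S"
  have "\<exists>F'. ?P F' \<and> (\<forall>F''. ?P F'' \<longrightarrow> card F' \<le> card F'')"
    by (rule ex_has_least_nat[of ?P F]) (simp add: assms(5))
  then obtain F' where "F' \<subseteq> F" "connects F' S" and least: "\<And>F''. ?P F'' \<Longrightarrow> card F' \<le> card F''"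
    by blast
  have "finite F'"
    using \<open>F' \<subseteq> F\<close> assms(2) simple_graph_finite_edges[OF G] by (meson finite_subset)
  have minimal: "\<not> connects (F' - {e}) S" if "e \<in> F'" for e
  proof
    assume "connects (F' - {e}) S"
    then have "card F' \<le> card (F' - {e})" using least[of "F' - {e}"] \<open>F' \<subseteq> F\<close> by auto
    with card_Diff1_less[OF \<open>finite F'\<close> that] show False by simp
  qed
  obtain s where "s \<in> S" using assms(4) by blast
  let ?T = "(S \<union> \<Union>F', F')"
  have "connects F' (S \<union> \<Union>F')"
    using connected_if_minimal_connecting[OF \<open>connects F' S\<close> minimal \<open>s \<in> S\<close>] .
  moreover have "acyclic_graph F'"
    using acyclic_if_minimal_connecting[OF \<open>connects F' S\<close> minimal] .
  ultimately have "is_tree (fst ?T) (snd ?T)"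
    unfolding is_tree_def connected_graph_iff_connects using assms(4) by simp
  moreover have "is_subgraph (fst ?T) (snd ?T) V E"
    using \<open>F' \<subseteq> F\<close> assms(2,3) simple_graph_edges_Pow[OF G]
    unfolding is_subgraph_def fst_conv snd_conv by blast
  ultimately have "S_tree V E S ?T" unfolding S_tree_def by simp
  with \<open>F' \<subseteq> F\<close> show ?thesis by (intro exI[of _ ?T]) simp
qed

lemma S_tree_connects: "S_tree V E S T \<Longrightarrow> connects (snd T) S"
  unfolding S_tree_def is_tree_def connected_graph_def connects_def by blast

lemma S_tree_edges_subset: "S_tree V E S T \<Longrightarrow> snd T \<subseteq> E"
  unfolding S_tree_def is_subgraph_def by blast

lemma connects_card_2:
  assumes "e \<in> F" "card e = 2"
  shows "connects F e"
proof -
  obtain p q where "e = {p, q}" using assms(2) card_2_iff[of e] by blast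
  with assms(1) show ?thesis using connects_edge by simp
qed

text \<open>Deleting an edge \<open>{p, q}\<close> of a tree leaves the third vertex of \<open>S\<close>
  joined to \<open>p\<close> or to \<open>q\<close>.\<close>
lemma S_tree_Diff_edge_connects_pair:
  assumes T: "S_tree V E S T" and "card S = 3" "e \<in> snd T" "e \<subseteq> S" "card e = 2"
  shows "\<exists>d. d \<subseteq> S \<and> card d = 2 \<and> d \<noteq> e \<and> connects (snd T - {e}) d"
proof -
  obtain p q where e: "e = {p, q}" "p \<noteq> q" using assms(5) card_2_iff[of e] by blast
  have "card (S - e) = 1"
    using assms(2,4,5) card_Diff_subset[of e S] finite_subset[of e S] by (simp add: card_ge_0_finite)
  then obtain r where "S - e = {r}" by (rule card_1_singletonE)
  then have r: "r \<in> S" "r \<notin> e" by auto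
  have "p \<in> S" "q \<in> S" using e assms(4) by auto
  then have "reach (snd T) p r" using S_tree_connects[OF T] r(1) unfolding connects_def by simp
  then have "reach (snd T - {e}) p r \<or> reach (snd T - {e}) q r"
    unfolding e(1) by (rule reach_Diff_edge_from_ends)
  then have "\<exists>a\<in>e. reach (snd T - {e}) a r" using e(1) by simp
  then obtain a where a: "a \<in> e" "reach (snd T - {e}) a r" ..
  show ?thesis
  proof (intro exI conjI)
    show "{a, r} \<subseteq> S" using a(1) r(1) assms(4) by blast
    have "a \<noteq> r" using a(1) r(2) by blast
    then show "card {a, r} = 2" by simp
    show "{a, r} \<noteq> e" using r(2) by blast
    show "connects (snd T - {e}) {a, r}" using a(2) by (simp add: connects_doubleton)
  qed
qed

lemma exchange_two_S_trees:
  assumes G: "simple_graph V E" and "S \<subseteq> V" "card S = 3"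
    and T: "S_tree V E S T1" "S_tree V E S T2"
    and e: "e1 \<in> snd T1" "e2 \<in> snd T2" "e1 \<noteq> e2" "e1 \<subseteq> S" "e2 \<subseteq> S" "card e1 = 2" "card e2 = 2"
    and d: "d1 \<noteq> d2" "d1 \<subseteq> S" "d2 \<subseteq> S" "card d1 = 2" "card d2 = 2"
      "connects (snd T1 - {e1}) d1" "connects (snd T2 - {e2}) d2"
  shows "\<exists>A C. S_tree V E S A \<and> S_tree V E S C \<and>
    snd A \<subseteq> (snd T1 - {e1}) \<union> (snd T2 - {e2}) \<and> snd C \<subseteq> {e1, e2}"
proof -
  let ?F = "(snd T1 - {e1}) \<union> (snd T2 - {e2})"
  have S: "S \<noteq> {}" using assms(3) by auto
  have "connects ?F d1" by (rule connects_mono[OF d(6)]) blast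
  moreover have "connects ?F d2" by (rule connects_mono[OF d(7)]) blast
  ultimately have "connects ?F S" by (rule connects_two_pairs[OF assms(3) d(2,3,4,5,1)])
  moreover have "?F \<subseteq> E" using S_tree_edges_subset[OF T(1)] S_tree_edges_subset[OF T(2)] by blast
  ultimately obtain A where "S_tree V E S A" "snd A \<subseteq> ?F"
    using connects_imp_S_tree[OF G _ assms(2) S, of ?F] by blast
  have "connects {e1, e2} e1" "connects {e1, e2} e2"
    using connects_card_2[of e1 "{e1, e2}"] connects_card_2[of e2 "{e1, e2}"] e(6,7) by simp_all
  then have "connects {e1, e2} S" by (rule connects_two_pairs[OF assms(3) e(4,5,6,7,3)])
  moreover have "{e1, e2} \<subseteq> E"
    using e(1,2) S_tree_edges_subset[OF T(1)] S_tree_edges_subset[OF T(2)] by blast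
  ultimately obtain C where "S_tree V E S C" "snd C \<subseteq> {e1, e2}"
    using connects_imp_S_tree[OF G _ assms(2) S, of "{e1, e2}"] by blast
  with \<open>S_tree V E S A\<close> \<open>snd A \<subseteq> ?F\<close> show ?thesis by blast
qed

lemma disjoint_family_on_index_eq:
  "disjoint_family_on A K \<Longrightarrow> i \<in> K \<Longrightarrow> j \<in> K \<Longrightarrow> x \<in> A i \<Longrightarrow> x \<in> A j \<Longrightarrow> i = j"
  using disjoint_family_onD by fastforce

lemma disjoint_family_on_meeting_choice:
  assumes "disjoint_family_on A K"
  obtains f where "inj_on f {i\<in>K. A i \<inter> I \<noteq> {}}"
    "\<And>i. i \<in> K \<Longrightarrow> A i \<inter> I \<noteq> {} \<Longrightarrow> f i \<in> A i \<inter> I"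
proof -
  define f where "f i = (SOME e. e \<in> A i \<inter> I)" for i
  have f: "f i \<in> A i \<inter> I" if "A i \<inter> I \<noteq> {}" for i
    unfolding f_def some_in_eq by (fact that)
  have "inj_on f {i\<in>K. A i \<inter> I \<noteq> {}}"
  proof (rule inj_onI)
    fix i j assume "i \<in> {i\<in>K. A i \<inter> I \<noteq> {}}" "j \<in> {i\<in>K. A i \<inter> I \<noteq> {}}" "f i = f j"
    then show "i = j" using f[of i] f[of j] disjoint_family_on_index_eq[OF assms, of i j "f i"] by auto
  qed
  with f show thesis using that by blast
qed

lemma card_disjoint_family_on_meeting_le:
  assumes "disjoint_family_on A K" "finite I"
  shows "card {i\<in>K. A i \<inter> I \<noteq> {}} \<le> card I"
proof -
  obtain f where "inj_on f {i\<in>K. A i \<inter> I \<noteq> {}}"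
    "\<And>i. i \<in> K \<Longrightarrow> A i \<inter> I \<noteq> {} \<Longrightarrow> f i \<in> A i \<inter> I"
    using disjoint_family_on_meeting_choice[OF assms(1)] by blast
  then show ?thesis using assms(2) by (intro card_inj_on_le) auto
qed

lemma disjoint_family_on_meeting_card_eq:
  assumes "disjoint_family_on A K" "finite I" "card {i\<in>K. A i \<inter> I \<noteq> {}} = card I"
  obtains f where "f ` {i\<in>K. A i \<inter> I \<noteq> {}} = I"
    "\<And>i. i \<in> K \<Longrightarrow> A i \<inter> I \<noteq> {} \<Longrightarrow> A i \<inter> I = {f i}"
proof -
  let ?N = "{i\<in>K. A i \<inter> I \<noteq> {}}"
  obtain f where inj: "inj_on f ?N"
    and f: "\<And>i. i \<in> K \<Longrightarrow> A i \<inter> I \<noteq> {} \<Longrightarrow> f i \<in> A i \<inter> I"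
    using disjoint_family_on_meeting_choice[OF assms(1)] by blast
  have "f ` ?N \<subseteq> I" using f by blast
  moreover have "card (f ` ?N) = card I" using card_image[OF inj] assms(3) by simp
  ultimately have onto: "f ` ?N = I" using card_subset_eq[OF assms(2)] by simp
  have "A i \<inter> I = {f i}" if "i \<in> K" "A i \<inter> I \<noteq> {}" for i
  proof
    show "A i \<inter> I \<subseteq> {f i}"
    proof
      fix e assume e: "e \<in> A i \<inter> I"
      then obtain j where j: "j \<in> ?N" "e = f j" using onto by blast
      then have "e \<in> A j" using f by blast
      then have "i = j" using e j(1) that(1) disjoint_family_on_index_eq[OF assms(1)] by blast
      then show "e \<in> {f i}" using j(2) by simp
    qed
    show "{f i} \<subseteq> A i \<inter> I" using f[OF that] by simp
  qed
  with onto show thesis by (rule that)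
qed

lemma edge_disjoint_S_trees_disjoint_family:
  "edge_disjoint_S_trees V E S k T \<Longrightarrow> disjoint_family_on (\<lambda>i. snd (T i)) {..<k}"
  unfolding edge_disjoint_S_trees_def disjoint_family_on_def by simp

lemma edge_disjoint_S_trees_take:
  "edge_disjoint_S_trees V E S n T \<Longrightarrow> m \<le> n \<Longrightarrow> edge_disjoint_S_trees V E S m T"
  unfolding edge_disjoint_S_trees_def by simp

lemma edge_disjoint_S_trees_replace_two:
  assumes T: "edge_disjoint_S_trees V E S k T" and ij: "i < k" "j < k" "i \<noteq> j"
    and A: "S_tree V E S A" and C: "S_tree V E S C"
    and AC: "snd A \<inter> snd C = {}" "snd A \<union> snd C \<subseteq> snd (T i) \<union> snd (T j)"
  shows "edge_disjoint_S_trees V E S k (T(i := A, j := C))"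
  unfolding edge_disjoint_S_trees_def
proof (intro conjI allI impI)
  let ?T = "T(i := A, j := C)"
  fix m assume "m < k"
  then show "S_tree V E S (?T m)"
    using T A C unfolding edge_disjoint_S_trees_def by simp
next
  let ?T = "T(i := A, j := C)"
  fix m m' assume m: "m < k" "m' < k" "m \<noteq> m'"
  have disj: "snd (T a) \<inter> snd (T b) = {}" if "a < k" "b < k" "a \<noteq> b" for a b
    using T that unfolding edge_disjoint_S_trees_def by blast
  have inside: "snd (?T a) \<subseteq> snd (T i) \<union> snd (T j)" if "a \<in> {i, j}" for a
    using that AC(2) ij(3) by auto
  have outside: "snd (T a) \<inter> (snd (T i) \<union> snd (T j)) = {}" if "a < k" "a \<notin> {i, j}" for a
    using disj[of a i] disj[of a j] that ij by blast
  show "snd (?T m) \<inter> snd (?T m') = {}"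
  proof (cases "m \<in> {i, j}"; cases "m' \<in> {i, j}")
    assume "m \<in> {i, j}" "m' \<in> {i, j}"
    then show ?thesis using m(3) AC(1) ij(3) by (auto simp: Int_commute)
  next
    assume "m \<in> {i, j}" "m' \<notin> {i, j}"
    then show ?thesis using inside[of m] outside[of m'] m(2) by auto
  next
    assume "m \<notin> {i, j}" "m' \<in> {i, j}"
    then show ?thesis using inside[of m'] outside[of m] m(1) by auto
  next
    assume "m \<notin> {i, j}" "m' \<notin> {i, j}"
    then show ?thesis using disj[OF m] by simp
  qed
qed

lemma edge_disjoint_S_trees_permute:
  assumes "edge_disjoint_S_trees V E S k T" "bij_betw \<sigma> {..<k} {..<k}"
  shows "edge_disjoint_S_trees V E S k (T \<circ> \<sigma>)"
  using assms bij_betwE[OF assms(2)] bij_betw_imp_inj_on[OF assms(2)]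
  unfolding edge_disjoint_S_trees_def inj_on_def by (simp, metis lessThan_iff)

lemma permutation_moving_subset_to_front:
  assumes "N \<subseteq> {..<k}"
  obtains \<sigma> where "bij_betw \<sigma> {..<k} {..<k}"
    "\<And>i. i < k \<Longrightarrow> \<sigma> i \<in> N \<longleftrightarrow> i < card N"
proof -
  define R where "R = {..<k} - N"
  define L where "L = sorted_list_of_set N @ sorted_list_of_set R"
  have fin: "finite N" "finite R" using assms finite_subset unfolding R_def by auto
  have "distinct L" unfolding L_def R_def using fin by auto
  moreover have "set L = {..<k}" unfolding L_def R_def using fin assms by auto
  ultimately have len: "length L = k" using distinct_card by fastforce
  have "bij_betw ((!) L) {..<k} {..<k}"
    using bij_betw_nth[OF \<open>distinct L\<close>] \<open>set L = {..<k}\<close> len by simp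
  moreover have "L ! i \<in> N \<longleftrightarrow> i < card N" if "i < k" for i
  proof (cases "i < card N")
    case True
    then have "L ! i = sorted_list_of_set N ! i" unfolding L_def by (simp add: nth_append)
    with True fin(1) show ?thesis by (metis length_sorted_list_of_set nth_mem set_sorted_list_of_set)
  next
    case False
    then have "L ! i = sorted_list_of_set R ! (i - card N)" unfolding L_def by (simp add: nth_append)
    moreover have "i - card N < length (sorted_list_of_set R)"
      using len that False unfolding L_def by simp
    ultimately have "L ! i \<in> R" using fin(2) by (metis nth_mem set_sorted_list_of_set)
    with False show ?thesis unfolding R_def by simp
  qed
  ultimately show thesis by (rule that)
qed

lemma edge_disjoint_S_trees_front:
  assumes "edge_disjoint_S_trees V E S k T" "card {i\<in>{..<k}. P (T i)} \<le> m"
  shows "\<exists>T'. edge_disjoint_S_trees V E S k T' \<and> (\<forall>i. m \<le> i \<and> i < k \<longrightarrow> \<not> P (T' i))"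
proof -
  let ?N = "{i\<in>{..<k}. P (T i)}"
  obtain \<sigma> where \<sigma>: "bij_betw \<sigma> {..<k} {..<k}"
    "\<And>i. i < k \<Longrightarrow> \<sigma> i \<in> ?N \<longleftrightarrow> i < card ?N"
    using permutation_moving_subset_to_front[of ?N k] by auto
  have "\<not> P ((T \<circ> \<sigma>) i)" if "m \<le> i" "i < k" for i
    using \<sigma>(2)[of i] bij_betwE[OF \<sigma>(1)] assms(2) that by auto
  with edge_disjoint_S_trees_permute[OF assms(1) \<sigma>(1)] show ?thesis by blast
qed

lemma edge_disjoint_S_trees_le_card_edges:
  assumes G: "simple_graph V E" and T: "edge_disjoint_S_trees V E S n T"
    and s: "s \<in> S" "s' \<in> S" "s \<noteq> s'"
  shows "n \<le> card E"
proof -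
  have "snd (T i) \<inter> E \<noteq> {}" if "i < n" for i
  proof
    assume "snd (T i) \<inter> E = {}"
    moreover have tree: "S_tree V E S (T i)" using T that unfolding edge_disjoint_S_trees_def by blast
    ultimately have "snd (T i) = {}" using S_tree_edges_subset[OF tree] by blast
    moreover have "reach (snd (T i)) s s'" using S_tree_connects[OF tree] s unfolding connects_def by simp
    ultimately show False using reach_empty[of s s'] s(3) by simp
  qed
  then have "{i\<in>{..<n}. snd (T i) \<inter> E \<noteq> {}} = {..<n}" by auto
  then have "card {..<n} \<le> card E"
    using card_disjoint_family_on_meeting_le[OF edge_disjoint_S_trees_disjoint_family[OF T]
        simple_graph_finite_edges[OF G]] by simp
  then show ?thesis by simp
qed

lemma exists_lambda_S_edge_disjoint_S_trees:
  assumes "simple_graph V E" "s \<in> S" "s' \<in> S" "s \<noteq> s'"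
  shows "\<exists>T. edge_disjoint_S_trees V E S (lambda_S V E S) T"
proof -
  let ?K = "{k. \<exists>T. edge_disjoint_S_trees V E S k T}"
  have "?K \<subseteq> {..card E}" using edge_disjoint_S_trees_le_card_edges[OF assms(1) _ assms(2-4)] by auto
  then have "finite ?K" by (rule finite_subset) simp
  moreover have "0 \<in> ?K" unfolding edge_disjoint_S_trees_def by simp
  ultimately have "Max ?K \<in> ?K" by (intro Max_in) auto
  then show ?thesis unfolding lambda_S_def by simp
qed

lemma lambda3_le_lambda_S:
  assumes "simple_graph V E" "S \<subseteq> V" "card S = 3"
  shows "lambda3 V E \<le> lambda_S V E S"
proof -
  have "{lambda_S V E S' | S'. S' \<subseteq> V \<and> card S' = 3} \<subseteq> lambda_S V E ` Pow V" by auto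
  moreover have "finite (lambda_S V E ` Pow V)" using assms(1) unfolding simple_graph_def by simp
  ultimately have "finite {lambda_S V E S' | S'. S' \<subseteq> V \<and> card S' = 3}"
    by (rule finite_subset)
  with assms(2,3) show ?thesis unfolding lambda3_def by (intro Min_le) auto
qed

lemma induced_edges_subset_pairs:
  "simple_graph V E \<Longrightarrow> induced_edges E S \<subseteq> {d. d \<subseteq> S \<and> card d = 2}"
  unfolding simple_graph_def induced_edges_def by auto

lemma card_pairs_of_triple: "card S = 3 \<Longrightarrow> card {d. d \<subseteq> S \<and> card d = 2} = 3"
  using n_subsets[of S 2] by (simp add: card_ge_0_finite numeral_eq_Suc)

lemma edge_disjoint_S_trees_exchange:
  assumes G: "simple_graph V E" and S: "S \<subseteq> V" "card S = 3"
    and T: "edge_disjoint_S_trees V E S k T" and ij: "i < k" "j < k" "i \<noteq> j"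
    and I: "I \<subseteq> {d. d \<subseteq> S \<and> card d = 2}" "snd (T i) \<inter> I = {e1}" "snd (T j) \<inter> I = {e2}"
    and d: "d1 \<noteq> d2" "d1 \<subseteq> S" "d2 \<subseteq> S" "card d1 = 2" "card d2 = 2"
      "connects (snd (T i) - {e1}) d1" "connects (snd (T j) - {e2}) d2"
  shows "\<exists>T'. edge_disjoint_S_trees V E S k T' \<and>
    {m\<in>{..<k}. snd (T' m) \<inter> I \<noteq> {}} \<subseteq> {m\<in>{..<k}. snd (T m) \<inter> I \<noteq> {}} - {i}"
proof -
  have trees: "S_tree V E S (T i)" "S_tree V E S (T j)"
    using T ij unfolding edge_disjoint_S_trees_def by auto
  have e: "e1 \<in> snd (T i)" "e2 \<in> snd (T j)" "e1 \<in> I" "e2 \<in> I" using I(2,3) by auto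
  have "e1 \<noteq> e2"
    using disjoint_family_on_index_eq[OF edge_disjoint_S_trees_disjoint_family[OF T], of i j e1]
      e(1,2) ij by auto
  then obtain A C where AC: "S_tree V E S A" "S_tree V E S C"
    "snd A \<subseteq> (snd (T i) - {e1}) \<union> (snd (T j) - {e2})" "snd C \<subseteq> {e1, e2}"
    using exchange_two_S_trees[OF G S trees e(1,2) _ _ _ _ _ d] e(3,4) I(1) by blast
  have "snd A \<inter> I = {}" using AC(3) I(2,3) by blast
  moreover have "snd C \<subseteq> I" using AC(4) e(3,4) by blast
  ultimately have "snd A \<inter> snd C = {}" by blast
  moreover have "snd A \<union> snd C \<subseteq> snd (T i) \<union> snd (T j)" using AC(3,4) e(1,2) by blast
  ultimately have "edge_disjoint_S_trees V E S k (T(i := A, j := C))"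
    by (rule edge_disjoint_S_trees_replace_two[OF T ij AC(1,2)])
  moreover have "{m\<in>{..<k}. snd ((T(i := A, j := C)) m) \<inter> I \<noteq> {}}
      \<subseteq> {m\<in>{..<k}. snd (T m) \<inter> I \<noteq> {}} - {i}"
    using \<open>snd A \<inter> I = {}\<close> I(3) ij(3) by auto
  ultimately show ?thesis by blast
qed

lemma nonconstant_if_avoids_image:
  assumes "d ` N \<subseteq> f ` N" "\<And>i. i \<in> N \<Longrightarrow> d i \<noteq> f i" "N \<noteq> {}"
  shows "\<exists>i\<in>N. \<exists>j\<in>N. d i \<noteq> d j"
proof (rule ccontr)
  assume const: "\<not> ?thesis"
  obtain i0 where "i0 \<in> N" using assms(3) by blast
  then obtain i where "i \<in> N" "d i0 = f i" using assms(1) by blast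
  moreover have "d i = d i0" using const \<open>i \<in> N\<close> \<open>i0 \<in> N\<close> by blast
  ultimately show False using assms(2) by simp
qed

lemma edge_disjoint_S_trees_at_most_two_meet_induced:
  assumes G: "simple_graph V E" and S: "S \<subseteq> V" "card S = 3" and T: "edge_disjoint_S_trees V E S k T"
  shows "\<exists>T'. edge_disjoint_S_trees V E S k T' \<and>
    card {i\<in>{..<k}. snd (T' i) \<inter> induced_edges E S \<noteq> {}} \<le> 2"
proof -
  let ?I = "induced_edges E S" and ?P = "{d. d \<subseteq> S \<and> card d = 2}"
  let ?N = "{i\<in>{..<k}. snd (T i) \<inter> ?I \<noteq> {}}"
  have fam: "disjoint_family_on (\<lambda>i. snd (T i)) {..<k}"
    by (rule edge_disjoint_S_trees_disjoint_family[OF T])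
  have IP: "?I \<subseteq> ?P" by (rule induced_edges_subset_pairs[OF G])
  have "finite ?P" using S(2) by (simp add: card_ge_0_finite)
  then have finI: "finite ?I" by (rule finite_subset[OF IP])
  have "card ?I \<le> 3" using card_mono[OF \<open>finite ?P\<close> IP] card_pairs_of_triple[OF S(2)] by simp
  show ?thesis
  proof (cases "card ?N \<le> 2")
    case True
    with T show ?thesis by (intro exI[of _ T]) simp
  next
    case False
    with card_disjoint_family_on_meeting_le[OF fam finI] \<open>card ?I \<le> 3\<close>
    have "card ?N = card ?I" "card ?I = 3" by simp_all
    then have "card ?I = card ?P" using card_pairs_of_triple[OF S(2)] by simp
    then have "?I = ?P" by (rule card_subset_eq[OF \<open>finite ?P\<close> IP])
    obtain f where onto: "f ` ?N = ?I"
      and meets: "\<And>i. i \<in> {..<k} \<Longrightarrow> snd (T i) \<inter> ?I \<noteq> {} \<Longrightarrow> snd (T i) \<inter> ?I = {f i}"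
      by (rule disjoint_family_on_meeting_card_eq[OF fam finI \<open>card ?N = card ?I\<close>]) blast
    have single: "snd (T i) \<inter> ?I = {f i}" if "i \<in> ?N" for i
      using meets that by simp
    have "\<forall>i\<in>?N. \<exists>d. d \<in> ?P \<and> d \<noteq> f i \<and> connects (snd (T i) - {f i}) d"
    proof
      fix i assume i: "i \<in> ?N"
      have "f i \<in> snd (T i)" "f i \<in> ?P" using single[OF i] IP by auto
      moreover have "S_tree V E S (T i)" using T i unfolding edge_disjoint_S_trees_def by simp
      ultimately show "\<exists>d. d \<in> ?P \<and> d \<noteq> f i \<and> connects (snd (T i) - {f i}) d"
        using S_tree_Diff_edge_connects_pair[OF _ S(2)] by simp
    qed
    from bchoice[OF this] obtain d
      where d: "\<forall>i\<in>?N. d i \<in> ?P \<and> d i \<noteq> f i \<and> connects (snd (T i) - {f i}) (d i)" ..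
    have "d ` ?N \<subseteq> f ` ?N" using d onto \<open>?I = ?P\<close> by auto
    moreover have "?N \<noteq> {}" using False card.empty by (metis le_0_eq zero_le)
    ultimately have "\<exists>i\<in>?N. \<exists>j\<in>?N. d i \<noteq> d j" using d by (intro nonconstant_if_avoids_image) auto
    then obtain i j where ij: "i \<in> ?N" "j \<in> ?N" "d i \<noteq> d j" by blast
    then have "i \<noteq> j" "i < k" "j < k" by auto
    have di: "d i \<subseteq> S" "card (d i) = 2" "connects (snd (T i) - {f i}) (d i)" using d ij(1) by auto
    have dj: "d j \<subseteq> S" "card (d j) = 2" "connects (snd (T j) - {f j}) (d j)" using d ij(2) by auto
    obtain T' where T': "edge_disjoint_S_trees V E S k T'"
      and sub: "{m\<in>{..<k}. snd (T' m) \<inter> ?I \<noteq> {}} \<subseteq> ?N - {i}"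
      using edge_disjoint_S_trees_exchange[OF G S T \<open>i < k\<close> \<open>j < k\<close> \<open>i \<noteq> j\<close> IP
          single[OF ij(1)] single[OF ij(2)] ij(3) di(1) dj(1) di(2) dj(2) di(3) dj(3)]
      by blast
    have "card {m\<in>{..<k}. snd (T' m) \<inter> ?I \<noteq> {}} \<le> card (?N - {i})"
      using sub by (intro card_mono) auto
    also have "\<dots> = 2" using \<open>card ?N = card ?I\<close> \<open>card ?I = 3\<close> ij(1) by simp
    finally show ?thesis using T' by blast
  qed
qed

theorem proposition2p1:
  fixes V :: "'a set" and E :: "'a set set" and k :: nat and x y z :: 'a
  assumes "simple_graph V E"
    and "lambda3 V E = k" and "k \<ge> 2"
    and "x \<in> V" and "y \<in> V" and "z \<in> V"
    and "x \<noteq> y" and "x \<noteq> z" and "y \<noteq> z"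
  shows "\<exists>T. edge_disjoint_S_trees V E {x, y, z} k T \<and>
           (\<forall>i. 2 \<le> i \<and> i < k \<longrightarrow> snd (T i) \<inter> induced_edges E {x, y, z} = {})"
proof -
  let ?S = "{x, y, z}"
  have S: "?S \<subseteq> V" "card ?S = 3" using assms(4-9) by auto
  obtain T0 where "edge_disjoint_S_trees V E ?S (lambda_S V E ?S) T0"
    using exists_lambda_S_edge_disjoint_S_trees[OF assms(1), of x ?S y] assms(7) by auto
  then have "edge_disjoint_S_trees V E ?S k T0"
    using edge_disjoint_S_trees_take lambda3_le_lambda_S[OF assms(1) S] assms(2) by blast
  then obtain T where "edge_disjoint_S_trees V E ?S k T"
    and "card {i\<in>{..<k}. snd (T i) \<inter> induced_edges E ?S \<noteq> {}} \<le> 2"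
    using edge_disjoint_S_trees_at_most_two_meet_induced[OF assms(1) S] by blast
  from edge_disjoint_S_trees_front[OF this] show ?thesis by simp
qed

end
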